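(* Let $(Y,U)$ be discrete random variables with $Y$ taking values in a finite set $\mathcal{Y}$, let $\mu\in(0,\frac12)$ and $\epsilon>0$. If $$\Pr\left(|h(Y|U)-c|>\epsilon\right)<\mu$$ for some $c>0$, then $$\Pr\left(|h(Y|U)-\mathbb{H}(Y|U)|>2\epsilon+\mu\log_2\frac{|\mathcal{Y}|}{\mu^2}\right)<\mu.$$
   Context: $h(Y|U)$ denotes the random variable $-\log_2 p_{Y|U}(Y|U)$; $\mathbb{H}(Y|U)$ is the conditional entropy. *)

theory Defs
  imports "HOL-Probability.Probability"
begin

text \<open>The pair (Y,U) of discrete random variables is represented by its joint
distribution p :: ('y \<times> 'u) pmf (Y = fst, U = snd).\<close>

definition cond_info :: "('y \<times> 'u) pmf \<Rightarrow> 'y \<Rightarrow> 'u \<Rightarrow> real" where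
  "cond_info p y u = - log 2 (pmf p (y, u) / pmf (map_pmf snd p) u)"

definition cond_entropy :: "('y \<times> 'u) pmf \<Rightarrow> real" where
  "cond_entropy p = measure_pmf.expectation p (\<lambda>(y, u). cond_info p y u)"

end

theory Submission
  imports Defs
begin

text \<open>Write \<open>h(Y|U) = log\<^sub>2 r\<close> with \<open>r = 1 / p(Y|U) \<ge> 1\<close>; summing over \<open>u\<close> shows
\<open>E[r] \<le> |\<Y>|\<close>. Let \<open>B\<close> be the event \<open>|h - c| > \<epsilon>\<close>, so \<open>P(B) < \<mu>\<close>. Off \<open>B\<close>, \<open>h\<close> is within
\<open>\<epsilon>\<close> of \<open>c\<close>. On \<open>B\<close>, concavity of the logarithm gives \<open>E[1\<^sub>B h] \<le> P(B) log\<^sub>2(|\<Y>|/P(B))\<close>,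
and Markov's inequality for \<open>r\<close> shows \<open>c - \<epsilon> < log\<^sub>2(2|\<Y>|)\<close>, which bounds the mass
\<open>c P(B)\<close> missing from \<open>E[h]\<close>. Both errors are at most \<open>\<mu> log\<^sub>2(|\<Y>|/\<mu>\<^sup>2)\<close>, so
\<open>|\<H>(Y|U) - c| \<le> \<epsilon> + \<mu> log\<^sub>2(|\<Y>|/\<mu>\<^sup>2)\<close>, and every outcome deviating from \<open>\<H>(Y|U)\<close> by more
than \<open>2\<epsilon> + \<mu> log\<^sub>2(|\<Y>|/\<mu>\<^sup>2)\<close> lies in \<open>B\<close>.\<close>

lemma log_le_tangent:
  fixes b w z :: real
  assumes "1 < b" "0 < w" "0 < z"
  shows "log b z \<le> log b w + (z - w) / (w * ln b)"
proof -
  have "log b z = log b w + ln (z / w) / ln b"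
    using assms by (simp add: log_def ln_div diff_divide_distrib)
  also have "ln (z / w) / ln b \<le> (z / w - 1) / ln b"
    using assms by (intro divide_right_mono ln_le_minus_one) auto
  also have "(z / w - 1) / ln b = (z - w) / (w * ln b)"
    using assms by (simp add: diff_divide_distrib)
  finally show ?thesis
    by simp
qed

lemma mult_log_div_le_mult_log_div_sq:
  fixes t \<mu> N :: real
  assumes t: "0 \<le> t" "t < \<mu>" and \<mu>: "\<mu> < 1/2" and N: "1 \<le> N"
  shows "t * log 2 (N / t) \<le> \<mu> * log 2 (N / \<mu>\<^sup>2)"
proof -
  define L where "L = - ln \<mu>"
  have "ln \<mu> < ln (1/2)"
    using t \<mu> by simp
  then have "2/3 < L"
    using ln2_ge_two_thirds by (simp add: L_def ln_div)
  have "t * ln (\<mu> / t) \<le> \<mu> - t"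
  proof (cases "t = 0")
    case False
    then have "t * ln (\<mu> / t) \<le> t * (\<mu> / t - 1)"
      using t by (intro mult_left_mono ln_le_minus_one) auto
    also have "\<dots> = \<mu> - t"
      using False by (simp add: right_diff_distrib)
    finally show ?thesis .
  qed (use t in simp)
  moreover have "t * ln N \<le> \<mu> * ln N"
    using t N by (intro mult_right_mono) auto
  moreover have "\<mu> - t + t * L \<le> 2 * \<mu> * L"
  proof (cases "1 \<le> L")
    case True
    have "t * L \<le> \<mu> * L" "\<mu> * 1 \<le> \<mu> * L"
      using True t by (intro mult_right_mono mult_left_mono; simp)+
    then show ?thesis
      using t by linarith
  next
    case False
    have "t * L \<le> t * 1" "\<mu> * (2/3) \<le> \<mu> * L"
      using False t \<open>2/3 < L\<close> by (intro mult_left_mono; simp)+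
    then show ?thesis
      using t by linarith
  qed
  moreover have "t * ln (N / t) = t * ln N + t * ln (\<mu> / t) + t * L"
    using t N by (cases "t = 0") (simp_all add: L_def ln_div algebra_simps)
  moreover have "\<mu> * ln (N / \<mu>\<^sup>2) = \<mu> * ln N + 2 * \<mu> * L"
    using t N by (simp add: L_def ln_div ln_mult power2_eq_square algebra_simps)
  ultimately have "t * ln (N / t) \<le> \<mu> * ln (N / \<mu>\<^sup>2)"
    by linarith
  then show ?thesis
    by (simp add: log_def divide_right_mono)
qed

lemma mult_le_mult_log_div_sq:
  fixes a t \<mu> N :: real
  assumes a: "a < log 2 (2 * N)" and t: "0 \<le> t" "t < \<mu>" and \<mu>: "\<mu> < 1/2" and N: "1 \<le> N"
  shows "a * t \<le> \<mu> * log 2 (N / \<mu>\<^sup>2)"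
proof -
  have "a * t \<le> max 0 (log 2 (2 * N)) * \<mu>"
    using a t by (intro mult_mono) auto
  also have "\<dots> = \<mu> * log 2 (2 * N)"
    using N by simp
  also have "\<dots> \<le> \<mu> * log 2 (N / \<mu>\<^sup>2)"
  proof (rule mult_left_mono)
    have "log 2 \<mu> < log 2 (1/2)"
      using t \<mu> by simp
    then show "log 2 (2 * N) \<le> log 2 (N / \<mu>\<^sup>2)"
      using t N by (simp add: log_mult log_divide power2_eq_square)
  qed (use t in simp)
  finally show ?thesis .
qed

lemma (in prob_space) integrable_log_of_ge_1:
  fixes Z :: "'a \<Rightarrow> real"
  assumes Z: "integrable M Z" "AE x in M. 1 \<le> Z x" and b: "1 < b"
  shows "integrable M (\<lambda>x. log b (Z x))"
proof (rule Bochner_Integration.integrable_bound)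
  show "integrable M (\<lambda>x. Z x / ln b)"
    using Z by simp
  show "(\<lambda>x. log b (Z x)) \<in> borel_measurable M"
    using borel_measurable_integrable[OF Z(1)] by measurable
  show "AE x in M. norm (log b (Z x)) \<le> norm (Z x / ln b)"
    using Z(2)
  proof eventually_elim
    case (elim x)
    then show ?case
      using b ln_bound[of "Z x"] by (simp add: log_def divide_right_mono)
  qed
qed

lemma (in prob_space) expectation_indicator_log_le:
  fixes Z :: "'a \<Rightarrow> real"
  assumes Z: "integrable M Z" "AE x in M. 1 \<le> Z x" and EZ: "expectation Z \<le> N"
    and B: "B \<in> events" and b: "1 < b"
  shows "expectation (\<lambda>x. indicator B x * log b (Z x)) \<le> prob B * log b (N / prob B)"
proof (cases "prob B = 0")
  case True
  then have "AE x in M. indicator B x * log b (Z x) = 0"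
    using B AE_prob_1[of "space M - B"] by (auto simp: prob_compl indicator_def)
  then show ?thesis
    using True by (simp add: integral_eq_zero_AE)
next
  case False
  have "expectation (\<lambda>_. 1) \<le> expectation Z"
    using Z by (intro integral_mono_AE) auto
  then have N: "1 \<le> N"
    using EZ prob_space by simp
  define w where "w = N / prob B"
  have w: "0 < w"
    using False N by (simp add: w_def zero_less_measure_iff)
  have indicator_B: "integrable M (indicator B :: 'a \<Rightarrow> real)"
    using B by (simp add: less_top[symmetric])
  define g where "g = (\<lambda>x. indicator B x * (log b w - 1 / ln b) + Z x / (w * ln b))"
  have "expectation (\<lambda>x. indicator B x * log b (Z x)) \<le> expectation g"
  proof (rule integral_mono_AE)
    show "integrable M (\<lambda>x. indicator B x * log b (Z x))"
      using integrable_real_mult_indicator[OF B integrable_log_of_ge_1[OF Z b]]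
      by (simp add: mult.commute)
    show "integrable M g"
      using indicator_B Z unfolding g_def by (intro Bochner_Integration.integrable_add) auto
    show "AE x in M. indicator B x * log b (Z x) \<le> g x"
      using Z(2)
    proof eventually_elim
      case (elim x)
      have "(Z x - w) / (w * ln b) = Z x / (w * ln b) - 1 / ln b"
        using w by (simp add: diff_divide_distrib)
      then have "log b (Z x) \<le> log b w - 1 / ln b + Z x / (w * ln b)"
        using log_le_tangent[OF b w, of "Z x"] elim by simp
      moreover have "0 \<le> Z x / (w * ln b)"
        using elim w b by simp
      ultimately show ?case
        by (simp add: g_def indicator_def)
    qed
  qed
  also have "expectation g = prob B * (log b w - 1 / ln b) + expectation Z / (w * ln b)"
    using indicator_B Z B by (simp add: g_def Int_absorb2)
  also have "\<dots> \<le> prob B * (log b w - 1 / ln b) + N / (w * ln b)"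
    using EZ w b by (intro add_left_mono divide_right_mono) auto
  also have "\<dots> = prob B * log b w"
    using False N b by (simp add: w_def field_simps)
  finally show ?thesis
    by (simp add: w_def)
qed

lemma (in prob_space) less_log_div_if_prob_log_ge:
  fixes Z :: "'a \<Rightarrow> real"
  assumes Z: "integrable M Z" "AE x in M. 1 \<le> Z x" and EZ: "expectation Z \<le> N"
    and b: "1 < b" and q: "0 < q" "q < prob {x \<in> space M. a \<le> log b (Z x)}"
  shows "a < log b (N / q)"
proof -
  have [measurable]: "Z \<in> borel_measurable M"
    using Z(1) by (rule borel_measurable_integrable)
  have "q < prob {x \<in> space M. a \<le> log b (Z x)}"
    by (rule q(2))
  also have "\<dots> = prob {x \<in> space M. b powr a \<le> Z x}"
    using Z(2) b by (intro measure_eq_AE) (auto elim!: eventually_mono simp: le_log_iff)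
  also have "\<dots> \<le> expectation Z / b powr a"
    using Z b by (intro integral_Markov_inequality_measure[where A = "space M"]) auto
  also have "\<dots> \<le> N / b powr a"
    using EZ by (simp add: divide_right_mono)
  finally have "b powr a < N / q"
    using q b by (simp add: field_simps)
  then show ?thesis
    using q b by (subst less_log_iff) (auto intro: le_less_trans[OF powr_ge_zero])
qed

lemma (in prob_space) less_log_double_if_concentrated:
  fixes Z :: "'a \<Rightarrow> real"
  assumes Z: "integrable M Z" "AE x in M. 1 \<le> Z x" and EZ: "expectation Z \<le> N"
    and b: "1 < b" and concentrated: "prob {x \<in> space M. \<epsilon> < \<bar>log b (Z x) - c\<bar>} < 1/2"
  shows "c - \<epsilon> < log b (2 * N)"
proof -
  have [measurable]: "Z \<in> borel_measurable M"
    using Z(1) by (rule borel_measurable_integrable)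
  have "1 - prob {x \<in> space M. \<epsilon> < \<bar>log b (Z x) - c\<bar>}
      = prob (space M - {x \<in> space M. \<epsilon> < \<bar>log b (Z x) - c\<bar>})"
    by (simp add: prob_compl)
  also have "\<dots> \<le> prob {x \<in> space M. c - \<epsilon> \<le> log b (Z x)}"
    by (rule finite_measure_mono) auto
  finally show ?thesis
    using less_log_div_if_prob_log_ge[OF Z EZ b, of "1/2" "c - \<epsilon>"] concentrated
    by (simp add: mult.commute)
qed

lemma (in prob_space) abs_expectation_indicator_le:
  fixes f :: "'a \<Rightarrow> real"
  assumes f: "integrable M f" and S: "S \<in> events" and bound: "\<And>x. x \<in> S \<Longrightarrow> \<bar>f x\<bar> \<le> \<epsilon>"
  shows "\<bar>expectation (\<lambda>x. indicator S x * f x)\<bar> \<le> \<epsilon> * prob S"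
proof -
  have "\<bar>expectation (\<lambda>x. indicator S x * f x)\<bar> \<le> expectation (\<lambda>x. \<bar>indicator S x * f x\<bar>)"
    using integral_norm_bound[of M] by simp
  also have "\<dots> \<le> expectation (\<lambda>x. \<epsilon> * indicator S x)"
  proof (rule integral_mono)
    show "integrable M (\<lambda>x. \<bar>indicator S x * f x\<bar>)"
      using integrable_real_mult_indicator[OF S f] by (simp add: mult.commute)
    show "integrable M (\<lambda>x. \<epsilon> * indicator S x)"
      using S by (simp add: less_top[symmetric])
  qed (auto simp: bound split: split_indicator)
  also have "\<dots> = \<epsilon> * prob S"
    using S sets.sets_into_space[OF S] by (simp add: Int_absorb2)
  finally show ?thesis .
qed

lemma (in prob_space) abs_expectation_diff_le:
  fixes X :: "'a \<Rightarrow> real"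
  assumes X: "integrable M X" "AE x in M. 0 \<le> X x" and "0 \<le> c" "0 \<le> \<epsilon>"
  defines "B \<equiv> {x \<in> space M. \<epsilon> < \<bar>X x - c\<bar>}"
  assumes tail: "expectation (\<lambda>x. indicator B x * X x) \<le> A"
    and shift: "(c - \<epsilon>) * prob B \<le> A"
  shows "\<bar>expectation X - c\<bar> \<le> \<epsilon> + A"
proof -
  have [measurable]: "X \<in> borel_measurable M"
    using X(1) by (rule borel_measurable_integrable)
  have B: "B \<in> events"
    unfolding B_def by measurable
  define D where "D = expectation (\<lambda>x. indicator (space M - B) x * (X x - c))"
  have "expectation X - c = expectation (\<lambda>x. X x - c)"
    using X(1) prob_space by simp
  also have "\<dots> = expectation (\<lambda>x. indicator (space M - B) x * (X x - c)
      + indicator B x * X x - c * indicator B x)"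
    by (rule Bochner_Integration.integral_cong) (auto simp: indicator_def)
  also have "\<dots> = D + expectation (\<lambda>x. indicator B x * X x) - c * prob B"
    using integrable_real_mult_indicator[of _ M] B X(1) sets.sets_into_space[OF B]
    by (simp add: D_def Int_absorb2 less_top[symmetric] mult.commute)
  finally have decomposition:
    "expectation X - c = D + expectation (\<lambda>x. indicator B x * X x) - c * prob B" .
  have "\<bar>D\<bar> \<le> \<epsilon> * prob (space M - B)"
    unfolding D_def using X(1) B by (intro abs_expectation_indicator_le) (auto simp: B_def)
  then have "\<bar>D\<bar> \<le> \<epsilon> - \<epsilon> * prob B"
    using B by (simp add: prob_compl right_diff_distrib)
  moreover have "0 \<le> expectation (\<lambda>x. indicator B x * X x)"
    using X(2) by (intro integral_nonneg_AE) (auto elim!: eventually_mono)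
  moreover have "0 \<le> \<epsilon> * prob B" "0 \<le> c * prob B"
    using \<open>0 \<le> c\<close> \<open>0 \<le> \<epsilon>\<close> by simp_all
  ultimately show ?thesis
    using decomposition tail shift by (simp add: left_diff_distrib abs_le_iff)
qed

definition inv_cond_prob :: "('y \<times> 'u) pmf \<Rightarrow> 'y \<times> 'u \<Rightarrow> real" where
  "inv_cond_prob p x = pmf (map_pmf snd p) (snd x) / pmf p x"

lemma cond_info_eq_log_inv_cond_prob: "cond_info p y u = log 2 (inv_cond_prob p (y, u))"
  by (simp add: cond_info_def inv_cond_prob_def flip: log_inverse)

lemma cond_entropy_eq_expectation_log_inv_cond_prob:
  "cond_entropy p = measure_pmf.expectation p (\<lambda>x. log 2 (inv_cond_prob p x))"
  unfolding cond_entropy_def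
  by (intro arg_cong[where f = "measure_pmf.expectation p"])
    (simp add: fun_eq_iff cond_info_eq_log_inv_cond_prob)

lemma pmf_le_pmf_map_snd: "pmf p x \<le> pmf (map_pmf snd p) (snd x)"
proof -
  have "pmf p x = measure p {x}"
    by (simp add: measure_pmf_single)
  also have "\<dots> \<le> measure p (snd -` {snd x})"
    by (intro measure_pmf.finite_measure_mono) auto
  finally show ?thesis
    by (simp add: pmf_map)
qed

lemma one_le_inv_cond_prob: "x \<in> set_pmf p \<Longrightarrow> 1 \<le> inv_cond_prob p x"
  using pmf_le_pmf_map_snd[of p x] by (simp add: inv_cond_prob_def pmf_positive)

lemma nn_integral_inv_cond_prob_le:
  fixes p :: "('y \<times> 'u) pmf"
  assumes Ys: "finite Ys" "\<forall>x \<in> set_pmf p. fst x \<in> Ys"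
  shows "(\<integral>\<^sup>+ x. inv_cond_prob p x \<partial>p) \<le> ennreal (real (card Ys))"
proof -
  have "Ys \<noteq> {}"
    using Ys(2) set_pmf_not_empty[of p] by auto
  define P where "P = pair_pmf (pmf_of_set Ys) (map_pmf snd p)"
  have "pmf p x * inv_cond_prob p x \<le> real (card Ys) * pmf P x" for x
  proof (cases "x \<in> set_pmf p")
    case True
    then show ?thesis
      using Ys \<open>Ys \<noteq> {}\<close> by (cases x) (force simp: inv_cond_prob_def P_def pmf_pair)
  qed (simp add: set_pmf_eq)
  then have "(\<integral>\<^sup>+ x. inv_cond_prob p x \<partial>p)
      \<le> (\<integral>\<^sup>+ x. ennreal (real (card Ys) * pmf P x) \<partial>count_space UNIV)"
    by (auto simp: nn_integral_measure_pmf intro!: nn_integral_mono simp flip: ennreal_mult')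
  also have "\<dots> = ennreal (real (card Ys))"
    by (simp add: ennreal_mult' nn_integral_cmult nn_integral_pmf)
  finally show ?thesis .
qed

lemma integrable_inv_cond_prob:
  fixes p :: "('y \<times> 'u) pmf"
  assumes "finite Ys" "\<forall>x \<in> set_pmf p. fst x \<in> Ys"
  shows "integrable p (inv_cond_prob p)"
  using nn_integral_inv_cond_prob_le[OF assms]
  by (intro integrableI_nonneg) (auto simp: inv_cond_prob_def top_unique intro: le_less_trans)

lemma expectation_inv_cond_prob_le:
  fixes p :: "('y \<times> 'u) pmf"
  assumes "finite Ys" "\<forall>x \<in> set_pmf p. fst x \<in> Ys"
  shows "measure_pmf.expectation p (inv_cond_prob p) \<le> card Ys"
proof -
  have "ennreal (measure_pmf.expectation p (inv_cond_prob p))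
      = (\<integral>\<^sup>+ x. inv_cond_prob p x \<partial>p)"
    using integrable_inv_cond_prob[OF assms]
    by (intro nn_integral_eq_integral[symmetric]) (auto simp: inv_cond_prob_def)
  then show ?thesis
    using nn_integral_inv_cond_prob_le[OF assms] by (metis ennreal_le_iff of_nat_0_le_iff)
qed

theorem corollary9:
  fixes p :: "('y \<times> 'u) pmf" and Ys :: "'y set" and \<mu> \<epsilon> c :: real
  assumes "finite Ys"
    and "\<forall>yu \<in> set_pmf p. fst yu \<in> Ys"
    and "0 < \<mu>" and "\<mu> < 1/2" and "0 < \<epsilon>" and "0 < c"
    and "measure_pmf.prob p {(y, u). \<bar>cond_info p y u - c\<bar> > \<epsilon>} < \<mu>"
  shows "measure_pmf.prob p {(y, u). \<bar>cond_info p y u - cond_entropy p\<bar>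
           > 2 * \<epsilon> + \<mu> * log 2 (real (card Ys) / \<mu>\<^sup>2)} < \<mu>"
proof -
  define r where "r = inv_cond_prob p"
  define N where "N = real (card Ys)"
  define L where "L = \<mu> * log 2 (N / \<mu>\<^sup>2)"
  define B where "B = {x. \<epsilon> < \<bar>log 2 (r x) - c\<bar>}"
  have r: "integrable p r" "AE x in p. 1 \<le> r x" "measure_pmf.expectation p r \<le> N"
    using assms(1,2) one_le_inv_cond_prob
    by (auto simp: r_def N_def AE_measure_pmf_iff integrable_inv_cond_prob
        expectation_inv_cond_prob_le)
  have N: "1 \<le> N"
    using assms(1,2) set_pmf_not_empty[of p] by (force simp: N_def Suc_le_eq card_gt_0_iff)
  have "{(y, u). \<bar>cond_info p y u - c\<bar> > \<epsilon>} = B"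
    by (auto simp: B_def r_def cond_info_eq_log_inv_cond_prob)
  then have PB: "measure_pmf.prob p B < \<mu>"
    using assms(7) by simp
  have tail: "measure_pmf.expectation p (\<lambda>x. indicator B x * log 2 (r x)) \<le> L"
    using measure_pmf.expectation_indicator_log_le[OF r, of B 2]
      mult_log_div_le_mult_log_div_sq[of "measure_pmf.prob p B" \<mu> N] PB assms(4) N
    by (simp add: L_def)
  have "c - \<epsilon> < log 2 (2 * N)"
    using measure_pmf.less_log_double_if_concentrated[OF r, of 2 \<epsilon> c] PB assms(4)
    by (simp add: B_def)
  then have shift: "(c - \<epsilon>) * measure_pmf.prob p B \<le> L"
    using mult_le_mult_log_div_sq PB assms(4) N by (simp add: L_def)
  have "AE x in p. 0 \<le> log 2 (r x)"
    using r(2) by (auto elim: eventually_mono)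
  then have "\<bar>cond_entropy p - c\<bar> \<le> \<epsilon> + L"
    using measure_pmf.abs_expectation_diff_le[of p "\<lambda>x. log 2 (r x)" c \<epsilon> L]
      measure_pmf.integrable_log_of_ge_1[OF r(1,2), of 2] tail shift assms(5,6)
    by (simp add: B_def r_def cond_entropy_eq_expectation_log_inv_cond_prob)
  then have "{(y, u). \<bar>cond_info p y u - cond_entropy p\<bar> > 2 * \<epsilon> + L} \<subseteq> B"
    by (auto simp: B_def r_def cond_info_eq_log_inv_cond_prob)
  then have "measure_pmf.prob p {(y, u). \<bar>cond_info p y u - cond_entropy p\<bar> > 2 * \<epsilon> + L}
      \<le> measure_pmf.prob p B"
    by (rule measure_pmf.finite_measure_mono) simp
  then show ?thesis
    using PB by (simp add: L_def N_def)
qed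

end
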